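(* Let $m\ge1$, $\mathbf x=(x_1,\dots,x_{m+1})$, $\mathbf y=(y_1,\dots,y_{m+1})$. If $y_{m+1}=ax_{m+1}$, then \[ Z_{\mathrm{HT}}(2m+1;\mathbf x,\mathbf y)=\prod_{i=1}^m\big[\sigma(a\bar x_iy_{m+1})\,\sigma(a\bar x_{m+1}y_i)\big]\,Z_{\mathrm{HT}}\big(2m;(x_1,\dots,x_m),(y_1,\dots,y_m)\big). \]
   Context: Notation: $\bar z=z^{-1}$, $\sigma(z)=z-z^{-1}$; $a$ is a fixed nonzero parameter. Vertex weights: at a vertex where a horizontal and a vertical line cross, the four incident edges are oriented with exactly two pointing in. Type 1: horizontal edges in, vertical out; type 2: horizontal out, vertical in; type 3: horizontal right, vertical up; type 4: horizontal left, vertical down; type 5: horizontal left, vertical up; type 6: horizontal right, vertical down. A vertex with spectral parameter $z$ has weight $\sigma(a^2)$ (types 1,2), $\sigma(az)$ (types 3,4), $\sigma(a\bar z)$ (types 5,6). A state is an orientation of internal edges satisfying the two-in rule at every vertex; the partition function is the sum over states of the product of vertex weights. Even half-turn model $Z_{\mathrm{HT}}(2m;\mathbf x,\mathbf y)$ ($\mathbf x,\mathbf y$ of length $m$): vertices $(r,j)$, $1\le r\le 2m$ (from the top), $1\le j\le m$ (from the left), vertex $(r,j)$ having parameter $x_{\min(r,2m+1-r)}\bar y_j$; left boundary edges point right, top boundary edges up, bottom boundary edges down; for each $r\le m$ the edges to the right of $(r,m)$ and of $(2m+1-r,m)$ form a single edge (U-turn) with one orientation. Odd half-turn model $Z_{\mathrm{HT}}(2m+1;\mathbf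 x,\mathbf y)$ ($\mathbf x,\mathbf y$ of length $m+1$): vertices $(r,j)$ with $1\le r\le 2m+1$, $1\le j\le m$, and $(r,m+1)$ with $m+2\le r\le 2m+1$; vertex $(r,j)$ has parameter $x_{\min(r,2m+2-r)}\bar y_j$. Edges join consecutive vertices in rows and columns. Left boundary edges point right, top boundary edges of columns $1,\dots,m$ point up, bottom boundary edges of columns $1,\dots,m+1$ point down. The edge to the right of $(m+1,m)$ and the edge above $(m+2,m+1)$ form a single edge, pointing right out of $(m+1,m)$ iff pointing down into $(m+2,m+1)$. For each $r\le m$ the edges to the right of $(r,m)$ and of $(2m+2-r,m+1)$ form a single edge with one orientation (out of one vertex, into the other). *)

theory Defs
  imports Complex_Main
begin

definition sigma :: "complex \<Rightarrow> complex" where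
  "sigma z = z - inverse z"

(* Edges of a lattice: H r j is the horizontal edge to the LEFT of vertex (r,j);
   V r j is the vertical edge ABOVE vertex (r,j).  Rows r counted from the top,
   columns j from the left. *)
datatype edge = H nat nat | V nat nat

(* Local configuration at a vertex: (hL, hR, uT, uB) where
   hL = left edge points right, hR = right edge points right,
   uT = top edge points up,     uB = bottom edge points up. *)
type_synonym vconf = "bool \<times> bool \<times> bool \<times> bool"

(* two-in rule: in-pointing edges are hL, \<not>hR, \<not>uT, uB *)
definition ice :: "vconf \<Rightarrow> bool" where
  "ice c = (case c of (hL, hR, uT, uB) \<Rightarrow>
     length (filter id [hL, \<not> hR, \<not> uT, uB]) = 2)"

(* vertex weight with spectral parameter z:
   types 1,2 (hL \<noteq> hR): sigma(a^2);
   types 3 (right,up), 4 (left,down): sigma(a z);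
   types 5 (left,up), 6 (right,down): sigma(a / z) *)
definition vweight :: "complex \<Rightarrow> complex \<Rightarrow> vconf \<Rightarrow> complex" where
  "vweight a z c = (case c of (hL, hR, uT, uB) \<Rightarrow>
     (if hL \<noteq> hR then sigma (a^2)
      else if hL = uT then sigma (a * z)
      else sigma (a * inverse z)))"

(* Generic partition function: a state is a set S of internal edges (those
   oriented right resp. up), cfg S v gives the configuration at vertex v,
   par v its spectral parameter. *)
definition pfun :: "complex \<Rightarrow> edge set \<Rightarrow> (nat \<times> nat) set
    \<Rightarrow> (edge set \<Rightarrow> nat \<times> nat \<Rightarrow> vconf) \<Rightarrow> (nat \<times> nat \<Rightarrow> complex) \<Rightarrow> complex" where
  "pfun a I Vs cfg par =
     (\<Sum>S \<in> {S. S \<subseteq> I \<and> (\<forall>v\<in>Vs. ice (cfg S v))}. \<Prod>v\<in>Vs. vweight a (par v) (cfg S v))"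

definition ev_hor :: "nat \<Rightarrow> edge set \<Rightarrow> nat \<Rightarrow> nat \<Rightarrow> bool" where
  "ev_hor m S r j =
     (if j = 1 then True
      else if j = m + 1 then (if r \<le> m then H r (m+1) \<in> S else H (2*m+1-r) (m+1) \<notin> S)
      else H r j \<in> S)"

definition ev_ver :: "nat \<Rightarrow> edge set \<Rightarrow> nat \<Rightarrow> nat \<Rightarrow> bool" where
  "ev_ver m S r j =
     (if r = 1 then True else if r = 2*m+1 then False else V r j \<in> S)"

definition ev_internal :: "nat \<Rightarrow> edge set" where
  "ev_internal m =
     {H r j | r j. 1 \<le> r \<and> r \<le> 2*m \<and> 2 \<le> j \<and> j \<le> m}
     \<union> {H r (m+1) | r. 1 \<le> r \<and> r \<le> m}
     \<union> {V r j | r j. 2 \<le> r \<and> r \<le> 2*m \<and> 1 \<le> j \<and> j \<le> m}"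

definition ev_verts :: "nat \<Rightarrow> (nat \<times> nat) set" where
  "ev_verts m = {1..2*m} \<times> {1..m}"

definition Z_HT_even :: "complex \<Rightarrow> nat \<Rightarrow> (nat \<Rightarrow> complex) \<Rightarrow> (nat \<Rightarrow> complex) \<Rightarrow> complex" where
  "Z_HT_even a m x y =
     pfun a (ev_internal m) (ev_verts m)
       (\<lambda>S (r, j). (ev_hor m S r j, ev_hor m S r (j+1), ev_ver m S r j, ev_ver m S (r+1) j))
       (\<lambda>(r, j). x (min r (2*m+1-r)) * inverse (y j))"

definition od_ver :: "nat \<Rightarrow> edge set \<Rightarrow> nat \<Rightarrow> nat \<Rightarrow> bool" where
  "od_ver m S r j =
     (if r = 2*m+2 then False
      else if j \<le> m \<and> r = 1 then True
      else V r j \<in> S)"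

definition od_hor :: "nat \<Rightarrow> edge set \<Rightarrow> nat \<Rightarrow> nat \<Rightarrow> bool" where
  "od_hor m S r j =
     (if j = 1 then True
      else if j \<le> m then H r j \<in> S
      else if j = m + 1 then
        (if r = m + 1 then \<not> od_ver m S (m+2) (m+1) else H r (m+1) \<in> S)
      else H (2*m+2-r) (m+1) \<notin> S)"

definition od_internal :: "nat \<Rightarrow> edge set" where
  "od_internal m =
     {H r j | r j. 1 \<le> r \<and> r \<le> 2*m+1 \<and> 2 \<le> j \<and> j \<le> m}
     \<union> {H r (m+1) | r. 1 \<le> r \<and> r \<le> 2*m+1 \<and> r \<noteq> m+1}
     \<union> {V r j | r j. 2 \<le> r \<and> r \<le> 2*m+1 \<and> 1 \<le> j \<and> j \<le> m}
     \<union> {V r (m+1) | r. m+2 \<le> r \<and> r \<le> 2*m+1}"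

definition od_verts :: "nat \<Rightarrow> (nat \<times> nat) set" where
  "od_verts m = ({1..2*m+1} \<times> {1..m}) \<union> ({m+2..2*m+1} \<times> {m+1})"

definition Z_HT_odd :: "complex \<Rightarrow> nat \<Rightarrow> (nat \<Rightarrow> complex) \<Rightarrow> (nat \<Rightarrow> complex) \<Rightarrow> complex" where
  "Z_HT_odd a m x y =
     pfun a (od_internal m) (od_verts m)
       (\<lambda>S (r, j). (od_hor m S r j, od_hor m S r (j+1), od_ver m S r j, od_ver m S (r+1) j))
       (\<lambda>(r, j). x (min r (2*m+2-r)) * inverse (y j))"

end

theory Submission
  imports Defs
begin

text \<open>Both half-turn models share the top \<open>m \<times> m\<close> square with the U-turns of its rows, so only
  their lower parts need to be compared. In the odd model row \<open>m + 1\<close>, with parameter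
  \<open>X = x (m + 1)\<close>, turns at its right end into column \<open>m + 1\<close>, whose vertex in row \<open>r\<close> has
  parameter \<open>x r / y (m + 1) = x r / (a X)\<close>. That vertex is the R-matrix exchanging a row with
  parameter \<open>X\<close> and a row with parameter \<open>x r\<close>, so by the Yang-Baxter equation the hook formed
  by this row and this column can be pushed through the rows below it. The column then runs along
  the left boundary and the row along the bottom boundary, where both are frozen: they contribute
  the factors \<open>\<sigma>(a y (m + 1) / x i)\<close> and \<open>\<sigma>(a y i / X)\<close>, and what is left is the lower part of
  the even model.\<close>

section \<open>Row and column transfer matrices\<close>

definition ice_weight :: "complex \<Rightarrow> complex \<Rightarrow> vconf \<Rightarrow> complex" where
  "ice_weight a z c = (if ice c then vweight a z c else 0)"

lemma sum_UNIV_bool: "(\<Sum>b\<in>(UNIV :: bool set). f b) = f True + f False"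
  by (simp add: UNIV_bool add.commute)

lemma mult_if_zero:
  "(x :: 'a :: mult_zero) * (if P then c else 0) = (if P then x * c else 0)"
  "(if P then c else 0) * x = (if P then c * x else 0)"
  by simp_all

abbreviation blists :: "nat \<Rightarrow> bool list set" where
  "blists n \<equiv> {s. length s = n}"

lemma finite_blists: "finite (blists n)"
  using finite_lists_length_eq[of "UNIV :: bool set" n] by simp

lemma sum_blists_Suc:
  "(\<Sum>s\<in>blists (Suc n). f s) = (\<Sum>s\<in>blists n. f (True # s)) + (\<Sum>s\<in>blists n. f (False # s))"
proof -
  have "blists (Suc n) = Cons True ` blists n \<union> Cons False ` blists n"
    by (auto simp: length_Suc_conv)
  then have "(\<Sum>s\<in>blists (Suc n). f s) = (\<Sum>s\<in>Cons True ` blists n. f s) + (\<Sum>s\<in>Cons False ` blists n. f s)"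
    by (auto intro: sum.union_disjoint finite_blists)
  then show ?thesis
    by (simp add: sum.reindex)
qed

text \<open>Orientations are encoded as in \<^typ>\<open>vconf\<close>: horizontal edges are \<^const>\<open>True\<close> when pointing
  right, vertical ones when pointing up. \<open>row_pf a x ys h ts bs h'\<close> is the partition function of a
  row with parameter \<open>x\<close> crossing columns with parameters \<open>ys\<close>, with boundary edges \<open>h\<close> (left),
  \<open>ts\<close> (top), \<open>bs\<close> (bottom) and \<open>h'\<close> (right); \<open>column_pf\<close> and \<open>block_pf\<close> are the analogues
  for a column and for a block of rows.\<close>

fun row_pf :: "complex \<Rightarrow> complex \<Rightarrow> complex list \<Rightarrow> bool \<Rightarrow> bool list \<Rightarrow> bool list \<Rightarrow> bool \<Rightarrow> complex" where
  "row_pf a x [] h ts bs h' = (if h = h' then 1 else 0)"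
| "row_pf a x (y # ys) h ts bs h' =
     (\<Sum>g\<in>UNIV. ice_weight a (x * inverse y) (h, g, hd ts, hd bs) * row_pf a x ys g (tl ts) (tl bs) h')"

fun column_pf :: "complex \<Rightarrow> complex \<Rightarrow> complex list \<Rightarrow> bool \<Rightarrow> bool list \<Rightarrow> bool list \<Rightarrow> bool \<Rightarrow> complex" where
  "column_pf a y [] u hls hrs u' = (if u = u' then 1 else 0)"
| "column_pf a y (x # xs) u hls hrs u' =
     (\<Sum>g\<in>UNIV. ice_weight a (x * inverse y) (hd hls, hd hrs, u, g) * column_pf a y xs g (tl hls) (tl hrs) u')"

fun block_pf :: "complex \<Rightarrow> complex list \<Rightarrow> complex list \<Rightarrow> bool list \<Rightarrow> bool list \<Rightarrow> bool list \<Rightarrow> bool list \<Rightarrow> complex" where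
  "block_pf a [] ys hls ts bs hrs = (if ts = bs then 1 else 0)"
| "block_pf a (x # xs) ys hls ts bs hrs =
     (\<Sum>s\<in>blists (length ys). row_pf a x ys (hd hls) ts s (hd hrs) * block_pf a xs ys (tl hls) s bs (tl hrs))"

lemma block_pf_single_column: "block_pf a xs [y] hls [u] [u'] hrs = column_pf a y xs u hls hrs u'"
proof (induction xs arbitrary: hls hrs u)
  case Nil
  then show ?case by simp
next
  case (Cons x xs)
  have "(\<Sum>s\<in>blists 1. f s) = f [True] + f [False]" for f :: "bool list \<Rightarrow> complex"
    using sum_blists_Suc[of f 0] by simp
  then show ?case
    by (cases "hd hrs") (simp_all add: Cons.IH sum_UNIV_bool)
qed

definition two_rows_pf ::
    "complex \<Rightarrow> complex \<Rightarrow> complex \<Rightarrow> complex list \<Rightarrow> bool list \<Rightarrow> bool list \<Rightarrow> bool \<Rightarrow> bool \<Rightarrow> bool \<Rightarrow> bool \<Rightarrow> complex" where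
  "two_rows_pf a X p ys ts bs hr fe h g =
     (\<Sum>s\<in>blists (length ys). row_pf a p ys h ts s hr * row_pf a X ys g s bs fe)"

text \<open>The right end of a row with parameter \<open>X\<close> turns down into a vertex with parameter
  \<open>p / (a X)\<close>, which the row with parameter \<open>p\<close> below crosses. A horizontal edge pointing right
  becomes a vertical edge pointing down, whence the negations.\<close>

definition turned_rows_pf ::
    "complex \<Rightarrow> complex \<Rightarrow> complex \<Rightarrow> complex list \<Rightarrow> bool \<Rightarrow> bool list \<Rightarrow> bool \<Rightarrow> bool list \<Rightarrow> bool \<Rightarrow> bool \<Rightarrow> complex" where
  "turned_rows_pf a X p ys e ts hl bs hr f = (\<Sum>s\<in>blists (length ys). \<Sum>g\<in>UNIV. \<Sum>h\<in>UNIV.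
      row_pf a X ys e ts s g * row_pf a p ys hl s bs h * ice_weight a (p * inverse (a * X)) (h, hr, \<not> g, f))"

lemma two_rows_pf_Cons:
  "two_rows_pf a X p (y # ys) ts bs hr fe h0 g0 =
    (\<Sum>s\<in>UNIV. \<Sum>h\<in>UNIV. \<Sum>g\<in>UNIV.
       ice_weight a (p * inverse y) (h0, h, hd ts, s) * ice_weight a (X * inverse y) (g0, g, s, hd bs)
       * two_rows_pf a X p ys (tl ts) (tl bs) hr fe h g)"
  unfolding two_rows_pf_def
  by (simp add: sum_blists_Suc sum_UNIV_bool sum.distrib sum_distrib_left sum_distrib_right algebra_simps)

lemma turned_rows_pf_Cons:
  "turned_rows_pf a X p (y # ys) e ts hl bs hr f =
    (\<Sum>s\<in>UNIV. \<Sum>e1\<in>UNIV. \<Sum>h1\<in>UNIV.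
       ice_weight a (X * inverse y) (e, e1, hd ts, s) * ice_weight a (p * inverse y) (hl, h1, s, hd bs)
       * turned_rows_pf a X p ys e1 (tl ts) h1 (tl bs) hr f)"
  unfolding turned_rows_pf_def
  by (simp add: sum_blists_Suc sum_UNIV_bool sum.distrib sum_distrib_left sum_distrib_right algebra_simps)

lemma yang_baxter:
  assumes "a \<noteq> 0" "X \<noteq> 0" "p \<noteq> 0" "y \<noteq> 0"
  shows "(\<Sum>s\<in>UNIV. \<Sum>g\<in>UNIV. \<Sum>h\<in>UNIV.
            ice_weight a (X * inverse y) (e, g, t, s) * ice_weight a (p * inverse y) (hl, h, s, b)
            * ice_weight a (p * inverse (a * X)) (h, hr, \<not> g, f))
       = (\<Sum>s\<in>UNIV. \<Sum>g\<in>UNIV. \<Sum>h\<in>UNIV.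
            ice_weight a (p * inverse (a * X)) (hl, h, \<not> e, g) * ice_weight a (p * inverse y) (h, hr, t, s)
            * ice_weight a (X * inverse y) (\<not> g, \<not> f, s, b))"
  using assms
  by (cases e; cases t; cases hl; cases b; cases hr; cases f;
      simp add: sum_UNIV_bool ice_weight_def ice_def vweight_def;
      simp add: sigma_def field_simps power2_eq_square)

lemma turned_rows_pf_eq_two_rows_pf:
  assumes "a \<noteq> 0" "X \<noteq> 0" "p \<noteq> 0" "\<forall>y\<in>set ys. y \<noteq> 0"
  shows "turned_rows_pf a X p ys e ts hl bs hr f =
    (\<Sum>g\<in>UNIV. \<Sum>h\<in>UNIV. ice_weight a (p * inverse (a * X)) (hl, h, \<not> e, g) * two_rows_pf a X p ys ts bs hr (\<not> f) h (\<not> g))"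
  using assms(4)
proof (induction ys arbitrary: e ts hl bs)
  case Nil
  then show ?case
    by (cases e; cases hl; cases hr; cases f) (simp_all add: turned_rows_pf_def two_rows_pf_def sum_UNIV_bool)
next
  case (Cons y ys)
  then have IH: "\<And>e ts hl bs. turned_rows_pf a X p ys e ts hl bs hr f =
    (\<Sum>g\<in>UNIV. \<Sum>h\<in>UNIV. ice_weight a (p * inverse (a * X)) (hl, h, \<not> e, g) * two_rows_pf a X p ys ts bs hr (\<not> f) h (\<not> g))"
    by simp
  define W1 where "W1 = ice_weight a (X * inverse y)"
  define W2 where "W2 = ice_weight a (p * inverse y)"
  define R where "R = ice_weight a (p * inverse (a * X))"
  define Q where "Q = two_rows_pf a X p ys (tl ts) (tl bs) hr (\<not> f)"
  note defs = W1_def[symmetric] W2_def[symmetric] R_def[symmetric] Q_def[symmetric]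
  have "turned_rows_pf a X p (y # ys) e ts hl bs hr f =
     (\<Sum>g\<in>UNIV. \<Sum>h\<in>UNIV. (\<Sum>s\<in>UNIV. \<Sum>e1\<in>UNIV. \<Sum>h1\<in>UNIV.
        W1 (e, e1, hd ts, s) * W2 (hl, h1, s, hd bs) * R (h1, h, \<not> e1, g)) * Q h (\<not> g))"
    unfolding turned_rows_pf_Cons IH defs by (simp add: sum_UNIV_bool algebra_simps)
  also have "\<dots> = (\<Sum>g\<in>UNIV. \<Sum>h\<in>UNIV. (\<Sum>s\<in>UNIV. \<Sum>g0\<in>UNIV. \<Sum>h0\<in>UNIV.
        R (hl, h0, \<not> e, g0) * W2 (h0, h, hd ts, s) * W1 (\<not> g0, \<not> g, s, hd bs)) * Q h (\<not> g))"
    unfolding W1_def W2_def R_def using yang_baxter[OF assms(1-3)] Cons.prems by simp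
  also have "\<dots> = (\<Sum>g\<in>UNIV. \<Sum>h\<in>UNIV. R (hl, h, \<not> e, g) * two_rows_pf a X p (y # ys) ts bs hr (\<not> f) h (\<not> g))"
    unfolding two_rows_pf_Cons defs by (simp add: sum_UNIV_bool algebra_simps)
  finally show ?case
    unfolding R_def .
qed

text \<open>A row with parameter \<open>X\<close> on top of the rows \<open>ps\<close>, turning at its right end into a column
  with parameter \<open>a X\<close> along their right side, versus that column along their left side turning at
  its bottom into the row below them.\<close>

definition row_then_column_pf where
  "row_then_column_pf a X ps ys e ts hls bs hrs f =
     (\<Sum>s\<in>blists (length ys). \<Sum>g\<in>UNIV. \<Sum>hs\<in>blists (length ps).
        row_pf a X ys e ts s g * block_pf a ps ys hls s bs hs * column_pf a (a * X) ps (\<not> g) hs hrs f)"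

definition column_then_row_pf where
  "column_then_row_pf a X ps ys e ts hls bs hrs f =
     (\<Sum>hs\<in>blists (length ps). \<Sum>g\<in>UNIV. \<Sum>s\<in>blists (length ys).
        column_pf a (a * X) ps (\<not> e) hls hs g * block_pf a ps ys hs ts s hrs * row_pf a X ys (\<not> g) s bs (\<not> f))"

lemma row_then_column_pf_Cons_turned:
  "row_then_column_pf a X (p # ps) ys e ts hls bs hrs f =
    (\<Sum>s1\<in>blists (length ys). \<Sum>u\<in>UNIV. turned_rows_pf a X p ys e ts (hd hls) s1 (hd hrs) u *
       (\<Sum>hs\<in>blists (length ps). block_pf a ps ys (tl hls) s1 bs hs * column_pf a (a * X) ps u hs (tl hrs) f))"
proof -
  define G where "G = (\<lambda>s hs s1. \<Sum>g\<in>UNIV. \<Sum>h\<in>UNIV. \<Sum>u\<in>UNIV.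
      row_pf a X ys e ts s g * row_pf a p ys (hd hls) s s1 h * block_pf a ps ys (tl hls) s1 bs hs
      * ice_weight a (p * inverse (a * X)) (h, hd hrs, \<not> g, u) * column_pf a (a * X) ps u hs (tl hrs) f)"
  have "row_then_column_pf a X (p # ps) ys e ts hls bs hrs f =
      (\<Sum>s\<in>blists (length ys). \<Sum>hs\<in>blists (length ps). \<Sum>s1\<in>blists (length ys). G s hs s1)"
    unfolding row_then_column_pf_def G_def
    by (simp add: sum_blists_Suc sum_UNIV_bool sum.distrib sum_distrib_left sum_distrib_right algebra_simps)
  also have "\<dots> = (\<Sum>s\<in>blists (length ys). \<Sum>s1\<in>blists (length ys). \<Sum>hs\<in>blists (length ps). G s hs s1)"
    by (rule sum.cong[OF refl], rule sum.swap)
  also have "\<dots> = (\<Sum>s1\<in>blists (length ys). \<Sum>s\<in>blists (length ys). \<Sum>hs\<in>blists (length ps). G s hs s1)"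
    by (rule sum.swap)
  also have "\<dots> = (\<Sum>s1\<in>blists (length ys). \<Sum>u\<in>UNIV. turned_rows_pf a X p ys e ts (hd hls) s1 (hd hrs) u *
      (\<Sum>hs\<in>blists (length ps). block_pf a ps ys (tl hls) s1 bs hs * column_pf a (a * X) ps u hs (tl hrs) f))"
    unfolding turned_rows_pf_def G_def
    by (simp add: sum_UNIV_bool sum.distrib sum_distrib_left sum_distrib_right algebra_simps)
  finally show ?thesis .
qed

lemma row_then_column_pf_Cons:
  assumes "a \<noteq> 0" "X \<noteq> 0" "p \<noteq> 0" "\<forall>y\<in>set ys. y \<noteq> 0"
  shows "row_then_column_pf a X (p # ps) ys e ts hls bs hrs f =
    (\<Sum>g\<in>UNIV. \<Sum>h\<in>UNIV. \<Sum>s\<in>blists (length ys). ice_weight a (p * inverse (a * X)) (hd hls, h, \<not> e, g) *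
       row_pf a p ys h ts s (hd hrs) * row_then_column_pf a X ps ys (\<not> g) s (tl hls) bs (tl hrs) f)"
proof -
  define G where "G = (\<lambda>s1 s. \<Sum>u\<in>UNIV. \<Sum>g\<in>UNIV. \<Sum>h\<in>UNIV. \<Sum>hs\<in>blists (length ps).
      ice_weight a (p * inverse (a * X)) (hd hls, h, \<not> e, g) * row_pf a p ys h ts s (hd hrs)
      * row_pf a X ys (\<not> g) s s1 (\<not> u) * block_pf a ps ys (tl hls) s1 bs hs * column_pf a (a * X) ps u hs (tl hrs) f)"
  have "row_then_column_pf a X (p # ps) ys e ts hls bs hrs f =
      (\<Sum>s1\<in>blists (length ys). \<Sum>s\<in>blists (length ys). G s1 s)"
    unfolding row_then_column_pf_Cons_turned turned_rows_pf_eq_two_rows_pf[OF assms] two_rows_pf_def G_def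
    by (simp add: sum_UNIV_bool sum.distrib sum_distrib_left sum_distrib_right algebra_simps)
  also have "\<dots> = (\<Sum>s\<in>blists (length ys). \<Sum>s1\<in>blists (length ys). G s1 s)"
    by (rule sum.swap)
  also have "\<dots> = (\<Sum>g\<in>UNIV. \<Sum>h\<in>UNIV. \<Sum>s\<in>blists (length ys).
      ice_weight a (p * inverse (a * X)) (hd hls, h, \<not> e, g) *
      row_pf a p ys h ts s (hd hrs) * row_then_column_pf a X ps ys (\<not> g) s (tl hls) bs (tl hrs) f)"
    unfolding row_then_column_pf_def G_def
    by (simp add: sum_UNIV_bool sum.distrib sum_distrib_left sum_distrib_right algebra_simps)
  finally show ?thesis .
qed

lemma column_then_row_pf_Cons:
  "column_then_row_pf a X (p # ps) ys e ts hls bs hrs f =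
    (\<Sum>g\<in>UNIV. \<Sum>h\<in>UNIV. \<Sum>s\<in>blists (length ys). ice_weight a (p * inverse (a * X)) (hd hls, h, \<not> e, g) *
       row_pf a p ys h ts s (hd hrs) * column_then_row_pf a X ps ys (\<not> g) s (tl hls) bs (tl hrs) f)"
proof -
  define G where "G = (\<lambda>hs s2 s. \<Sum>g\<in>UNIV. \<Sum>h\<in>UNIV. \<Sum>g2\<in>UNIV.
      ice_weight a (p * inverse (a * X)) (hd hls, h, \<not> e, g) * row_pf a p ys h ts s (hd hrs)
      * column_pf a (a * X) ps g (tl hls) hs g2 * block_pf a ps ys hs s s2 (tl hrs) * row_pf a X ys (\<not> g2) s2 bs (\<not> f))"
  have "column_then_row_pf a X (p # ps) ys e ts hls bs hrs f =
      (\<Sum>hs\<in>blists (length ps). \<Sum>s2\<in>blists (length ys). \<Sum>s\<in>blists (length ys). G hs s2 s)"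
    unfolding column_then_row_pf_def G_def
    by (simp add: sum_blists_Suc sum_UNIV_bool sum.distrib sum_distrib_left sum_distrib_right algebra_simps)
  also have "\<dots> = (\<Sum>hs\<in>blists (length ps). \<Sum>s\<in>blists (length ys). \<Sum>s2\<in>blists (length ys). G hs s2 s)"
    by (rule sum.cong[OF refl], rule sum.swap)
  also have "\<dots> = (\<Sum>s\<in>blists (length ys). \<Sum>hs\<in>blists (length ps). \<Sum>s2\<in>blists (length ys). G hs s2 s)"
    by (rule sum.swap)
  also have "\<dots> = (\<Sum>g\<in>UNIV. \<Sum>h\<in>UNIV. \<Sum>s\<in>blists (length ys).
      ice_weight a (p * inverse (a * X)) (hd hls, h, \<not> e, g) *
      row_pf a p ys h ts s (hd hrs) * column_then_row_pf a X ps ys (\<not> g) s (tl hls) bs (tl hrs) f)"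
    unfolding column_then_row_pf_def G_def
    by (simp add: sum_UNIV_bool sum.distrib sum_distrib_left sum_distrib_right algebra_simps)
  finally show ?thesis .
qed

lemma row_then_column_eq_column_then_row:
  assumes "a \<noteq> 0" "X \<noteq> 0" "\<forall>p\<in>set ps. p \<noteq> 0" "\<forall>y\<in>set ys. y \<noteq> 0"
    and "length ts = length ys" "length bs = length ys"
  shows "row_then_column_pf a X ps ys e ts hls bs hrs f = column_then_row_pf a X ps ys e ts hls bs hrs f"
  using assms(3,5)
proof (induction ps arbitrary: e ts hls hrs)
  case Nil
  have "row_then_column_pf a X [] ys e ts hls bs hrs f = row_pf a X ys e ts bs (\<not> f)"
    unfolding row_then_column_pf_def using assms(6)
    by (cases f) (simp_all add: sum_UNIV_bool sum.distrib mult_if_zero sum.delta sum.delta' finite_blists)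
  moreover have "column_then_row_pf a X [] ys e ts hls bs hrs f = row_pf a X ys e ts bs (\<not> f)"
    unfolding column_then_row_pf_def using Nil.prems(2)
    by (cases e) (simp_all add: sum_UNIV_bool sum.distrib mult_if_zero sum.delta sum.delta' finite_blists)
  ultimately show ?case
    by simp
next
  case (Cons p ps)
  then have p: "p \<noteq> 0" and ps: "\<forall>p\<in>set ps. p \<noteq> 0"
    by simp_all
  show ?case
    unfolding row_then_column_pf_Cons[OF assms(1,2) p assms(4)] column_then_row_pf_Cons
    using Cons.IH[OF ps] by (intro sum.cong refl) simp
qed

lemma column_pf_frozen:
  assumes "length hs = length xs"
  shows "column_pf a y xs False (replicate (length xs) True) hs g =
     (if hs = replicate (length xs) True \<and> \<not> g then (\<Prod>x\<leftarrow>xs. sigma (a * inverse (x * inverse y))) else 0)"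
  using assms
proof (induction xs arbitrary: hs)
  case Nil
  then show ?case
    by (cases g) auto
next
  case (Cons x xs)
  then obtain h hs' where "hs = h # hs'" "length hs' = length xs"
    by (cases hs) auto
  with Cons.IH show ?case
    by (cases h) (simp_all add: sum_UNIV_bool ice_weight_def ice_def vweight_def)
qed

lemma row_pf_left_False_frozen:
  "length s = length ys \<Longrightarrow> row_pf a x ys False s (replicate (length ys) False) True = 0"
proof (induction ys arbitrary: s)
  case Nil
  then show ?case
    by simp
next
  case (Cons y ys)
  then obtain t s' where "s = t # s'" "length s' = length ys"
    by (cases s) auto
  with Cons.IH show ?case
    by (cases t) (simp_all add: sum_UNIV_bool ice_weight_def ice_def vweight_def)
qed

lemma row_pf_frozen:
  "length s = length ys \<Longrightarrow> row_pf a x ys True s (replicate (length ys) False) True =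
     (if s = replicate (length ys) False then (\<Prod>y\<leftarrow>ys. sigma (a * inverse (x * inverse y))) else 0)"
proof (induction ys arbitrary: s)
  case Nil
  then show ?case
    by simp
next
  case (Cons y ys)
  then obtain t s' where "s = t # s'" "length s' = length ys"
    by (cases s) auto
  with Cons.IH row_pf_left_False_frozen show ?case
    by (cases t) (simp_all add: sum_UNIV_bool ice_weight_def ice_def vweight_def)
qed

lemma sum_block_pf_column_pf_eq_row_then_column_pf:
  "(\<Sum>hs\<in>blists (length ps). \<Sum>g\<in>UNIV.
      block_pf a (X # ps) ys (True # hls) ts bs (g # hs) * column_pf a (a * X) ps (\<not> g) hs rs f)
    = row_then_column_pf a X ps ys True ts hls bs rs f"
proof -
  define G where "G = (\<lambda>hs g s. row_pf a X ys True ts s g * block_pf a ps ys hls s bs hs * column_pf a (a * X) ps (\<not> g) hs rs f)"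
  have "(\<Sum>hs\<in>blists (length ps). \<Sum>g\<in>UNIV.
          block_pf a (X # ps) ys (True # hls) ts bs (g # hs) * column_pf a (a * X) ps (\<not> g) hs rs f)
     = (\<Sum>hs\<in>blists (length ps). \<Sum>g\<in>UNIV. \<Sum>s\<in>blists (length ys). G hs g s)"
    unfolding G_def by (simp add: sum_distrib_right)
  also have "\<dots> = (\<Sum>hs\<in>blists (length ps). \<Sum>s\<in>blists (length ys). \<Sum>g\<in>UNIV. G hs g s)"
    by (rule sum.cong[OF refl], rule sum.swap)
  also have "\<dots> = (\<Sum>s\<in>blists (length ys). \<Sum>hs\<in>blists (length ps). \<Sum>g\<in>UNIV. G hs g s)"
    by (rule sum.swap)
  also have "\<dots> = row_then_column_pf a X ps ys True ts hls bs rs f"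
    unfolding row_then_column_pf_def G_def by (simp add: sum.swap[of _ UNIV])
  finally show ?thesis .
qed

lemma column_then_row_pf_frozen:
  fixes ps :: "complex list"
  assumes "length ts = length ys"
  defines "T \<equiv> replicate (length ps) True" and "F \<equiv> replicate (length ys) False"
  shows "column_then_row_pf a X ps ys True ts T F rs False =
    (\<Prod>p\<leftarrow>ps. sigma (a * inverse (p * inverse (a * X)))) * (\<Prod>y\<leftarrow>ys. sigma (a * inverse (X * inverse y)))
    * block_pf a ps ys T ts F rs"
proof -
  define c where "c = (\<Prod>p\<leftarrow>ps. sigma (a * inverse (p * inverse (a * X))))"
  define d where "d = (\<Prod>y\<leftarrow>ys. sigma (a * inverse (X * inverse y)))"
  have "column_then_row_pf a X ps ys True ts T F rs False = (\<Sum>hs\<in>blists (length ps). \<Sum>g\<in>UNIV. \<Sum>s\<in>blists (length ys).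
     (if hs = T \<and> \<not> g then c else 0) * block_pf a ps ys hs ts s rs * (if s = F then d else 0))"
    unfolding column_then_row_pf_def T_def F_def c_def d_def
    by (intro sum.cong refl) (simp add: column_pf_frozen row_pf_frozen)
  also have "\<dots> = (\<Sum>hs\<in>blists (length ps). if hs = T then c * d * block_pf a ps ys hs ts F rs else 0)"
    by (intro sum.cong refl) (simp add: sum_UNIV_bool F_def finite_blists mult_if_zero sum.delta')
  also have "\<dots> = c * d * block_pf a ps ys T ts F rs"
    by (simp add: sum.delta finite_blists T_def)
  finally show ?thesis
    unfolding c_def d_def .
qed

text \<open>Moving the column to the left and the row to the bottom, both meet the boundary of the
  model and freeze.\<close>

lemma hook_pf_reduction:
  assumes "a \<noteq> 0" "X \<noteq> 0" "\<forall>p\<in>set ps. p \<noteq> 0" "\<forall>y\<in>set ys. y \<noteq> 0" "length ts = length ys"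
  defines "T \<equiv> replicate (length ps) True" and "F \<equiv> replicate (length ys) False"
  shows "(\<Sum>hs\<in>blists (length ps). \<Sum>g\<in>UNIV.
            block_pf a (X # ps) ys (True # T) ts F (g # hs) * column_pf a (a * X) ps (\<not> g) hs rs False)
    = (\<Prod>p\<leftarrow>ps. sigma (a * inverse (p * inverse (a * X)))) * (\<Prod>y\<leftarrow>ys. sigma (a * inverse (X * inverse y)))
       * block_pf a ps ys T ts F rs"
  using assms unfolding sum_block_pf_column_pf_eq_row_then_column_pf
  by (simp add: row_then_column_eq_column_then_row column_then_row_pf_frozen)

section \<open>Rectangular grids\<close>

lemma sum_Pow_Un:
  assumes "finite A" "finite B" "A \<inter> B = {}"
  shows "(\<Sum>S\<in>Pow (A \<union> B). f S) = (\<Sum>S1\<in>Pow A. \<Sum>S2\<in>Pow B. f (S1 \<union> S2))"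
proof -
  have "bij_betw (\<lambda>(S1, S2). S1 \<union> S2) (Pow A \<times> Pow B) (Pow (A \<union> B))"
    by (rule bij_betw_byWitness[where f' = "\<lambda>S. (S \<inter> A, S \<inter> B)"]) (use assms(3) in auto)
  then have "(\<Sum>S\<in>Pow (A \<union> B). f S) = (\<Sum>(S1, S2)\<in>Pow A \<times> Pow B. f (S1 \<union> S2))"
    by (simp add: sum.reindex_bij_betw[symmetric] case_prod_unfold)
  also have "\<dots> = (\<Sum>S1\<in>Pow A. \<Sum>S2\<in>Pow B. f (S1 \<union> S2))"
    by (simp add: sum.cartesian_product)
  finally show ?thesis .
qed

lemma sum_Pow_insert:
  assumes "finite B" "e \<notin> B"
  shows "(\<Sum>S\<in>Pow (insert e B). f S) = (\<Sum>S\<in>Pow B. f S + f (insert e S))"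
proof -
  have "(\<Sum>S\<in>Pow (insert e B). f S) = (\<Sum>S1\<in>Pow {e}. \<Sum>S2\<in>Pow B. f (S1 \<union> S2))"
    using sum_Pow_Un[of "{e}" B f] assms by simp
  also have "Pow {e} = {{}, {e}}"
    by blast
  finally show ?thesis
    by (simp add: sum.distrib)
qed

lemma sum_Pow_image_eq_sum_blists:
  "inj_on e {..<n} \<Longrightarrow> (\<Sum>S\<in>Pow (e ` {..<n}). f S) = (\<Sum>s\<in>blists n. f (e ` {i. i < n \<and> s ! i}))"
proof (induction n arbitrary: e f)
  case 0
  then show ?case
    by simp
next
  case (Suc n)
  define e' where "e' = e \<circ> Suc"
  have inj': "inj_on e' {..<n}" and notin: "e 0 \<notin> e' ` {..<n}"
    using Suc.prems unfolding e'_def inj_on_def by auto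
  have img: "e ` {..<Suc n} = insert (e 0) (e' ` {..<n})"
    unfolding e'_def by (auto simp: lessThan_Suc_eq_insert_0)
  have nth_Cons_set: "{i. i < Suc n \<and> (b # s) ! i} = (if b then {0} else {}) \<union> Suc ` {i. i < n \<and> s ! i}" for b s
  proof (rule set_eqI)
    show "i \<in> {i. i < Suc n \<and> (b # s) ! i} \<longleftrightarrow> i \<in> (if b then {0} else {}) \<union> Suc ` {i. i < n \<and> s ! i}" for i
      by (cases i) auto
  qed
  have "e ` {i. i < Suc n \<and> (True # s) ! i} = insert (e 0) (e' ` {i. i < n \<and> s ! i})"
    and "e ` {i. i < Suc n \<and> (False # s) ! i} = e' ` {i. i < n \<and> s ! i}" for s
    unfolding nth_Cons_set e'_def by auto
  then show ?case
    unfolding img sum_Pow_insert[OF finite_imageI[OF finite_lessThan] notin] sum.distrib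
      Suc.IH[OF inj'] sum_blists_Suc by (simp add: add.commute)
qed

text \<open>The grid with rows \<open>r0, \<dots>, r0 + k - 1\<close> and columns \<open>c0 + 1, \<dots>, c0 + n\<close>, spectral
  parameters \<open>px r * inverse (py j)\<close>, boundary orientations \<open>lf r\<close>, \<open>rt r\<close>, \<open>tp j\<close>, \<open>bt j\<close>, and
  the same edge names as the half-turn models.\<close>

definition grid_edges :: "nat \<Rightarrow> nat \<Rightarrow> nat \<Rightarrow> nat \<Rightarrow> edge set" where
  "grid_edges r0 k c0 n = {H r j | r j. r0 \<le> r \<and> r < r0 + k \<and> Suc c0 < j \<and> j \<le> c0 + n}
     \<union> {V r j | r j. r0 < r \<and> r < r0 + k \<and> c0 < j \<and> j \<le> c0 + n}"

definition grid_hor :: "nat \<Rightarrow> nat \<Rightarrow> (nat \<Rightarrow> bool) \<Rightarrow> (nat \<Rightarrow> bool) \<Rightarrow> edge set \<Rightarrow> nat \<Rightarrow> nat \<Rightarrow> bool" where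
  "grid_hor c0 n lf rt S r j = (if j = Suc c0 then lf r else if j = Suc (c0 + n) then rt r else H r j \<in> S)"

definition grid_ver :: "nat \<Rightarrow> nat \<Rightarrow> (nat \<Rightarrow> bool) \<Rightarrow> (nat \<Rightarrow> bool) \<Rightarrow> edge set \<Rightarrow> nat \<Rightarrow> nat \<Rightarrow> bool" where
  "grid_ver r0 k tp bt S r j = (if r = r0 then tp j else if r = r0 + k then bt j else V r j \<in> S)"

definition grid_weight where
  "grid_weight a r0 k c0 n lf rt tp bt px py S r j =
     ice_weight a (px r * inverse (py j))
       (grid_hor c0 n lf rt S r j, grid_hor c0 n lf rt S r (Suc j), grid_ver r0 k tp bt S r j, grid_ver r0 k tp bt S (Suc r) j)"

definition grid_pf where
  "grid_pf a r0 k c0 n lf rt tp bt px py =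
     (\<Sum>S\<in>Pow (grid_edges r0 k c0 n). \<Prod>r\<in>{r0..<r0 + k}. \<Prod>j\<in>{c0<..c0 + n}. grid_weight a r0 k c0 n lf rt tp bt px py S r j)"

lemma finite_grid_edges: "finite (grid_edges r0 k c0 n)"
proof -
  have "grid_edges r0 k c0 n \<subseteq> (\<lambda>(r, j). H r j) ` ({r0..<r0 + k} \<times> {..c0 + n}) \<union> (\<lambda>(r, j). V r j) ` ({r0..<r0 + k} \<times> {..c0 + n})"
    unfolding grid_edges_def by auto
  then show ?thesis
    by (rule finite_subset) auto
qed

lemma grid_pf_cong:
  assumes "\<And>r. r0 \<le> r \<Longrightarrow> r < r0 + k \<Longrightarrow> lf r = lf' r \<and> rt r = rt' r"
    and "\<And>j. c0 < j \<Longrightarrow> j \<le> c0 + n \<Longrightarrow> tp j = tp' j \<and> bt j = bt' j"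
  shows "grid_pf a r0 k c0 n lf rt tp bt px py = grid_pf a r0 k c0 n lf' rt' tp' bt' px py"
  unfolding grid_pf_def
proof (intro sum.cong prod.cong refl)
  fix S r j
  assume "r \<in> {r0..<r0 + k}" "j \<in> {c0<..c0 + n}"
  then show "grid_weight a r0 k c0 n lf rt tp bt px py S r j = grid_weight a r0 k c0 n lf' rt' tp' bt' px py S r j"
    using assms[of r] assms[of j] unfolding grid_weight_def grid_hor_def grid_ver_def by auto
qed

lemma grid_pf_one_row_Suc:
  assumes "n \<ge> 1"
  shows "grid_pf a r0 1 c0 (Suc n) lf rt tp bt px py =
    (\<Sum>g\<in>UNIV. ice_weight a (px r0 * inverse (py (Suc c0))) (lf r0, g, tp (Suc c0), bt (Suc c0))
       * grid_pf a r0 1 (Suc c0) n (\<lambda>_. g) rt tp bt px py)"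
proof -
  define e where "e = H r0 (Suc (Suc c0))"
  define E where "E = grid_edges r0 1 (Suc c0) n"
  have edges: "grid_edges r0 1 c0 (Suc n) = insert e E" and notin: "e \<notin> E"
    unfolding grid_edges_def e_def E_def using assms by auto
  have row: "(\<Prod>r\<in>{r0..<r0 + 1}. \<Prod>j\<in>{c0<..c0 + Suc n}.
        grid_weight a r0 1 c0 (Suc n) lf rt tp bt px py (if g then insert e S else S) r j) =
      ice_weight a (px r0 * inverse (py (Suc c0))) (lf r0, g, tp (Suc c0), bt (Suc c0))
      * (\<Prod>j\<in>{Suc c0<..Suc c0 + n}. grid_weight a r0 1 (Suc c0) n (\<lambda>_. g) rt tp bt px py S r0 j)"
    if "S \<subseteq> E" for S g
  proof -
    have "e \<notin> S"
      using that notin by auto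
    have "{c0<..c0 + Suc n} = insert (Suc c0) {Suc c0<..Suc c0 + n}"
      by auto
    moreover have "grid_weight a r0 1 c0 (Suc n) lf rt tp bt px py (if g then insert e S else S) r0 j =
        grid_weight a r0 1 (Suc c0) n (\<lambda>_. g) rt tp bt px py S r0 j" if "j \<in> {Suc c0<..Suc c0 + n}" for j
      using that \<open>e \<notin> S\<close> unfolding grid_weight_def grid_hor_def grid_ver_def e_def by auto
    ultimately show ?thesis
      using assms \<open>e \<notin> S\<close> by (auto simp: grid_weight_def grid_hor_def grid_ver_def e_def)
  qed
  have sum_Pow_edges: "(\<Sum>S\<in>Pow (insert e E). f S) = (\<Sum>S\<in>Pow E. \<Sum>g\<in>UNIV. f (if g then insert e S else S))" for f
    using sum_Pow_insert[OF finite_grid_edges[of r0 1 "Suc c0" n, folded E_def] notin]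
    by (simp add: sum_UNIV_bool add.commute)
  have "grid_pf a r0 1 c0 (Suc n) lf rt tp bt px py =
     (\<Sum>S\<in>Pow E. \<Sum>g\<in>UNIV. ice_weight a (px r0 * inverse (py (Suc c0))) (lf r0, g, tp (Suc c0), bt (Suc c0))
        * (\<Prod>j\<in>{Suc c0<..Suc c0 + n}. grid_weight a r0 1 (Suc c0) n (\<lambda>_. g) rt tp bt px py S r0 j))"
    unfolding grid_pf_def edges sum_Pow_edges by (intro sum.cong refl row) auto
  then show ?thesis
    by (simp add: grid_pf_def E_def sum_distrib_left sum.swap[of _ UNIV])
qed

lemma grid_pf_one_row:
  assumes "n \<ge> 1"
  shows "grid_pf a r0 1 c0 n lf rt tp bt px py =
    row_pf a (px r0) (map py [Suc c0..<Suc (c0 + n)]) (lf r0) (map tp [Suc c0..<Suc (c0 + n)])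
      (map bt [Suc c0..<Suc (c0 + n)]) (rt r0)"
  using assms
proof (induction n arbitrary: c0 lf rule: nat_induct_at_least)
  case base
  have "grid_edges r0 1 c0 1 = {}"
    unfolding grid_edges_def by auto
  moreover have "{c0<..c0 + 1} = {Suc c0}"
    by auto
  ultimately show ?case
    by (simp add: grid_pf_def grid_weight_def grid_hor_def grid_ver_def sum_UNIV_bool mult_if_zero)
next
  case (Suc n)
  have "[Suc c0..<Suc (c0 + Suc n)] = Suc c0 # [Suc (Suc c0)..<Suc (Suc c0 + n)]"
    by (simp add: upt_conv_Cons)
  then show ?case
    unfolding grid_pf_one_row_Suc[OF Suc.hyps] Suc.IH by (simp add: sum_UNIV_bool add.commute)
qed

definition vedges_above :: "nat \<Rightarrow> nat \<Rightarrow> nat \<Rightarrow> edge set" where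
  "vedges_above r c0 n = {V r j | j. c0 < j \<and> j \<le> c0 + n}"

lemma vedges_above_eq_image: "vedges_above r c0 n = (\<lambda>i. V r (Suc c0 + i)) ` {..<n}"
proof
  show "vedges_above r c0 n \<subseteq> (\<lambda>i. V r (Suc c0 + i)) ` {..<n}"
  proof
    fix z
    assume "z \<in> vedges_above r c0 n"
    then obtain j where "z = V r j" "c0 < j" "j \<le> c0 + n"
      unfolding vedges_above_def by auto
    then show "z \<in> (\<lambda>i. V r (Suc c0 + i)) ` {..<n}"
      by (auto intro!: image_eqI[of _ _ "j - Suc c0"])
  qed
qed (auto simp: vedges_above_def)

lemma grid_edges_split_first_row:
  "k \<ge> 1 \<Longrightarrow> grid_edges r0 (Suc k) c0 n =
     grid_edges r0 1 c0 n \<union> (vedges_above (Suc r0) c0 n \<union> grid_edges (Suc r0) k c0 n)"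
  unfolding grid_edges_def vedges_above_def by auto

lemma grid_weight_first_row:
  assumes "k \<ge> 1" "S1 \<subseteq> grid_edges r0 1 c0 n" "S2 \<subseteq> vedges_above (Suc r0) c0 n" "S3 \<subseteq> grid_edges (Suc r0) k c0 n"
  shows "grid_weight a r0 (Suc k) c0 n lf rt tp bt px py (S1 \<union> (S2 \<union> S3)) r0 j =
      grid_weight a r0 1 c0 n lf rt tp (\<lambda>j. V (Suc r0) j \<in> S2) px py S1 r0 j"
proof -
  have "H r0 j' \<in> S1 \<union> (S2 \<union> S3) \<longleftrightarrow> H r0 j' \<in> S1" for j'
    using assms unfolding vedges_above_def grid_edges_def by auto
  moreover have "V (Suc r0) j \<in> S1 \<union> (S2 \<union> S3) \<longleftrightarrow> V (Suc r0) j \<in> S2"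
    using assms unfolding grid_edges_def by auto
  ultimately show ?thesis
    using assms(1) unfolding grid_weight_def grid_hor_def grid_ver_def by simp
qed

lemma grid_weight_other_rows:
  assumes "S1 \<subseteq> grid_edges r0 1 c0 n" "S2 \<subseteq> vedges_above (Suc r0) c0 n" "S3 \<subseteq> grid_edges (Suc r0) k c0 n"
    and "r \<in> {Suc r0..<Suc r0 + k}"
  shows "grid_weight a r0 (Suc k) c0 n lf rt tp bt px py (S1 \<union> (S2 \<union> S3)) r j =
      grid_weight a (Suc r0) k c0 n lf rt (\<lambda>j. V (Suc r0) j \<in> S2) bt px py S3 r j"
proof -
  have "H r j' \<in> S1 \<union> (S2 \<union> S3) \<longleftrightarrow> H r j' \<in> S3" for j'
    using assms unfolding vedges_above_def grid_edges_def by auto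
  moreover have "V r j \<in> S1 \<union> (S2 \<union> S3) \<longleftrightarrow> (if r = Suc r0 then V r j \<in> S2 else V r j \<in> S3)"
    using assms unfolding grid_edges_def vedges_above_def by auto
  moreover have "V (Suc r) j \<in> S1 \<union> (S2 \<union> S3) \<longleftrightarrow> V (Suc r) j \<in> S3"
    using assms unfolding vedges_above_def grid_edges_def by auto
  ultimately show ?thesis
    using assms(4) unfolding grid_weight_def grid_hor_def grid_ver_def by auto
qed

lemma grid_pf_split_first_row_Pow:
  assumes "k \<ge> 1"
  shows "grid_pf a r0 (Suc k) c0 n lf rt tp bt px py =
    (\<Sum>S\<in>Pow (vedges_above (Suc r0) c0 n). grid_pf a r0 1 c0 n lf rt tp (\<lambda>j. V (Suc r0) j \<in> S) px py
                  * grid_pf a (Suc r0) k c0 n lf rt (\<lambda>j. V (Suc r0) j \<in> S) bt px py)"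
proof -
  define A where "A = grid_edges r0 1 c0 n"
  define B where "B = vedges_above (Suc r0) c0 n"
  define C where "C = grid_edges (Suc r0) k c0 n"
  define mid where "mid = (\<lambda>S2 j. V (Suc r0) j \<in> S2)"
  have fin: "finite A" "finite B" "finite C"
    unfolding A_def B_def C_def vedges_above_eq_image by (simp_all add: finite_grid_edges)
  have disj: "A \<inter> (B \<union> C) = {}" "B \<inter> C = {}"
    unfolding A_def B_def C_def grid_edges_def vedges_above_def by auto
  define row where "row = (\<lambda>S2 S1. \<Prod>j\<in>{c0<..c0 + n}. grid_weight a r0 1 c0 n lf rt tp (mid S2) px py S1 r0 j)"
  define rest where "rest = (\<lambda>S2 S3. \<Prod>r\<in>{Suc r0..<Suc r0 + k}. \<Prod>j\<in>{c0<..c0 + n}.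
      grid_weight a (Suc r0) k c0 n lf rt (mid S2) bt px py S3 r j)"
  have "grid_pf a r0 (Suc k) c0 n lf rt tp bt px py = (\<Sum>S1\<in>Pow A. \<Sum>S2\<in>Pow B. \<Sum>S3\<in>Pow C. row S2 S1 * rest S2 S3)"
    unfolding grid_pf_def grid_edges_split_first_row[OF assms] A_def[symmetric] B_def[symmetric] C_def[symmetric]
      sum_Pow_Un[OF fin(1) finite_UnI[OF fin(2,3)] disj(1)] sum_Pow_Un[OF fin(2,3) disj(2)]
  proof (intro sum.cong refl)
    fix S1 S2 S3
    assume S: "S1 \<in> Pow A" "S2 \<in> Pow B" "S3 \<in> Pow C"
    have first: "grid_weight a r0 (Suc k) c0 n lf rt tp bt px py (S1 \<union> (S2 \<union> S3)) r0 j =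
        grid_weight a r0 1 c0 n lf rt tp (mid S2) px py S1 r0 j" for j
      unfolding mid_def by (rule grid_weight_first_row) (use assms S in \<open>auto simp: A_def B_def C_def\<close>)
    have other: "grid_weight a r0 (Suc k) c0 n lf rt tp bt px py (S1 \<union> (S2 \<union> S3)) r j =
        grid_weight a (Suc r0) k c0 n lf rt (mid S2) bt px py S3 r j" if "r \<in> {Suc r0..<Suc r0 + k}" for r j
      unfolding mid_def by (rule grid_weight_other_rows) (use that S in \<open>auto simp: A_def B_def C_def\<close>)
    have "{r0..<r0 + Suc k} = insert r0 {Suc r0..<Suc r0 + k}" and "r0 \<notin> {Suc r0..<Suc r0 + k}"
      by auto
    then show "(\<Prod>r\<in>{r0..<r0 + Suc k}. \<Prod>j\<in>{c0<..c0 + n}.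
        grid_weight a r0 (Suc k) c0 n lf rt tp bt px py (S1 \<union> (S2 \<union> S3)) r j) = row S2 S1 * rest S2 S3"
      unfolding row_def rest_def by (simp add: first other)
  qed
  also have "\<dots> = (\<Sum>S2\<in>Pow B. grid_pf a r0 1 c0 n lf rt tp (mid S2) px py * grid_pf a (Suc r0) k c0 n lf rt (mid S2) bt px py)"
    unfolding grid_pf_def row_def rest_def A_def C_def
    by (subst sum.swap) (simp add: sum_product)
  finally show ?thesis
    unfolding B_def mid_def .
qed

lemma grid_pf_split_first_row:
  assumes "k \<ge> 1"
  shows "grid_pf a r0 (Suc k) c0 n lf rt tp bt px py =
    (\<Sum>s\<in>blists n. grid_pf a r0 1 c0 n lf rt tp (\<lambda>j. s ! (j - Suc c0)) px py
                  * grid_pf a (Suc r0) k c0 n lf rt (\<lambda>j. s ! (j - Suc c0)) bt px py)"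
proof -
  have inj: "inj_on (\<lambda>i. V (Suc r0) (Suc c0 + i)) {..<n}"
    by (simp add: inj_on_def)
  have "V (Suc r0) j \<in> (\<lambda>i. V (Suc r0) (Suc c0 + i)) ` {i. i < length s \<and> s ! i} \<longleftrightarrow> s ! (j - Suc c0)"
    if "c0 < j" "j \<le> c0 + length s" for s j
    using that by (auto simp: image_iff intro: exI[of _ "j - Suc c0"])
  then show ?thesis
    unfolding grid_pf_split_first_row_Pow[OF assms] vedges_above_eq_image sum_Pow_image_eq_sum_blists[OF inj]
    by (intro sum.cong refl arg_cong2[where f = times] grid_pf_cong conjI) auto
qed

lemma grid_pf_eq_block_pf:
  assumes "k \<ge> 1" "n \<ge> 1"
  shows "grid_pf a r0 k c0 n lf rt tp bt px py =
    block_pf a (map px [r0..<r0 + k]) (map py [Suc c0..<Suc (c0 + n)]) (map lf [r0..<r0 + k])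
      (map tp [Suc c0..<Suc (c0 + n)]) (map bt [Suc c0..<Suc (c0 + n)]) (map rt [r0..<r0 + k])"
  using assms(1)
proof (induction k arbitrary: r0 tp rule: nat_induct_at_least)
  case base
  show ?case
    unfolding grid_pf_one_row[OF assms(2)] by (simp add: mult_if_zero sum.delta' finite_blists)
next
  case (Suc k)
  have rows: "[r0..<r0 + Suc k] = r0 # [Suc r0..<Suc r0 + k]"
    by (simp add: upt_conv_Cons)
  have "map (\<lambda>j. s ! (j - Suc c0)) [Suc c0..<Suc (c0 + n)] = s" if "s \<in> blists n" for s
    using that by (intro nth_equalityI) (auto simp del: upt_Suc)
  then show ?case
    unfolding grid_pf_split_first_row[OF Suc.hyps] grid_pf_one_row[OF assms(2)] Suc.IH rows
      list.map block_pf.simps list.sel length_map length_upt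
    by (intro sum.cong) simp_all
qed

section \<open>Decomposition of the half-turn models\<close>

lemma prod_ice_weight:
  "finite Vs \<Longrightarrow> (\<Prod>v\<in>Vs. ice_weight a (par v) (cfg v)) =
     (if \<forall>v\<in>Vs. ice (cfg v) then \<Prod>v\<in>Vs. vweight a (par v) (cfg v) else 0)"
  by (auto simp: ice_weight_def intro: prod.cong)

lemma pfun_eq_sum_Pow:
  assumes "finite I" "finite Vs"
  shows "pfun a I Vs cfg par = (\<Sum>S\<in>Pow I. \<Prod>v\<in>Vs. ice_weight a (par v) (cfg S v))"
proof -
  have "{S. S \<subseteq> I \<and> (\<forall>v\<in>Vs. ice (cfg S v))} = Pow I \<inter> {S. \<forall>v\<in>Vs. ice (cfg S v)}"
    by auto
  then show ?thesis
    unfolding pfun_def prod_ice_weight[OF assms(2)] using assms(1) by (simp add: sum.inter_restrict)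
qed

lemma sum_Pow_prod_split_region:
  fixes f g :: "'e set \<Rightarrow> 'v \<Rightarrow> 'c :: comm_semiring_1"
  assumes "finite I1" "finite I2" "I1 \<inter> I2 = {}" "finite V1" "finite V2" "V1 \<inter> V2 = {}"
    and "\<And>T S v. T \<subseteq> I1 \<Longrightarrow> S \<subseteq> I2 \<Longrightarrow> v \<in> V1 \<Longrightarrow> f (T \<union> S) v = g T v"
  shows "(\<Sum>S\<in>Pow (I1 \<union> I2). \<Prod>v\<in>V1 \<union> V2. f S v) =
    (\<Sum>T\<in>Pow I1. (\<Prod>v\<in>V1. g T v) * (\<Sum>S\<in>Pow I2. \<Prod>v\<in>V2. f (T \<union> S) v))"
proof -
  have "(\<Prod>v\<in>V1. f (T \<union> S) v) = (\<Prod>v\<in>V1. g T v)" if "T \<in> Pow I1" "S \<in> Pow I2" for T S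
    using assms(7) that by (intro prod.cong) auto
  then show ?thesis
    unfolding sum_Pow_Un[OF assms(1-3)] prod.union_disjoint[OF assms(4-6)] sum_distrib_left
    by (intro sum.cong refl) (simp add: sum_distrib_left)
qed

abbreviation od_cfg :: "nat \<Rightarrow> edge set \<Rightarrow> nat \<times> nat \<Rightarrow> vconf" where
  "od_cfg m \<equiv> \<lambda>S (r, j). (od_hor m S r j, od_hor m S r (j + 1), od_ver m S r j, od_ver m S (r + 1) j)"

abbreviation ev_cfg :: "nat \<Rightarrow> edge set \<Rightarrow> nat \<times> nat \<Rightarrow> vconf" where
  "ev_cfg m \<equiv> \<lambda>S (r, j). (ev_hor m S r j, ev_hor m S r (j + 1), ev_ver m S r j, ev_ver m S (r + 1) j)"

abbreviation od_par :: "nat \<Rightarrow> (nat \<Rightarrow> complex) \<Rightarrow> (nat \<Rightarrow> complex) \<Rightarrow> nat \<times> nat \<Rightarrow> complex" where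
  "od_par m x y \<equiv> \<lambda>(r, j). x (min r (2 * m + 2 - r)) * inverse (y j)"

abbreviation ev_par :: "nat \<Rightarrow> (nat \<Rightarrow> complex) \<Rightarrow> (nat \<Rightarrow> complex) \<Rightarrow> nat \<times> nat \<Rightarrow> complex" where
  "ev_par m x y \<equiv> \<lambda>(r, j). x (min r (2 * m + 1 - r)) * inverse (y j)"

text \<open>The lower part of the even model consists of rows \<open>m + 1, \<dots>, 2 m\<close>; that of the odd model of
  rows \<open>m + 1, \<dots>, 2 m + 1\<close> and the extra column \<open>m + 1\<close>, separated from them by the
  \<open>seam_edges\<close>.\<close>

definition top_edges :: "nat \<Rightarrow> edge set" where
  "top_edges m = {H r j | r j. 1 \<le> r \<and> r \<le> m \<and> 2 \<le> j \<and> j \<le> Suc m}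
     \<union> {V r j | r j. 2 \<le> r \<and> r \<le> Suc m \<and> 1 \<le> j \<and> j \<le> m}"

definition seam_edges :: "nat \<Rightarrow> edge set" where
  "seam_edges m = insert (V (m + 2) (Suc m)) {H r (Suc m) | r. m + 2 \<le> r \<and> r \<le> 2 * m + 1}"

definition od_lower_edges :: "nat \<Rightarrow> edge set" where
  "od_lower_edges m = seam_edges m \<union> (grid_edges (Suc m) (Suc m) 0 m \<union> grid_edges (m + 2) m m 1)"

definition od_lower_verts :: "nat \<Rightarrow> (nat \<times> nat) set" where
  "od_lower_verts m = {Suc m..<Suc m + Suc m} \<times> {0<..m} \<union> {m + 2..<m + 2 + m} \<times> {m<..m + 1}"

definition ev_lower_verts :: "nat \<Rightarrow> (nat \<times> nat) set" where
  "ev_lower_verts m = {Suc m..<Suc m + m} \<times> {0<..m}"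

definition top_weight where
  "top_weight a m x y T = (\<Prod>v\<in>{1..m} \<times> {1..m}. ice_weight a (ev_par m x y v) (ev_cfg m T v))"

definition od_lower_pf where
  "od_lower_pf a m x y T = (\<Sum>S\<in>Pow (od_lower_edges m). \<Prod>v\<in>od_lower_verts m. ice_weight a (od_par m x y v) (od_cfg m (T \<union> S) v))"

definition ev_lower_pf where
  "ev_lower_pf a m x y T = (\<Sum>S\<in>Pow (grid_edges (Suc m) m 0 m). \<Prod>v\<in>ev_lower_verts m. ice_weight a (ev_par m x y v) (ev_cfg m (T \<union> S) v))"

lemma finite_top_edges: "finite (top_edges m)"
proof -
  have "top_edges m \<subseteq> (\<lambda>(r, j). H r j) ` ({..m} \<times> {..Suc m}) \<union> (\<lambda>(r, j). V r j) ` ({..Suc m} \<times> {..m})"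
    unfolding top_edges_def by auto
  then show ?thesis
    by (rule finite_subset) auto
qed

lemma finite_seam_edges: "finite (seam_edges m)"
proof -
  have "seam_edges m \<subseteq> insert (V (m + 2) (Suc m)) ((\<lambda>r. H r (Suc m)) ` {..2 * m + 1})"
    unfolding seam_edges_def by auto
  then show ?thesis
    by (rule finite_subset) auto
qed

lemma finite_od_lower_edges: "finite (od_lower_edges m)"
  unfolding od_lower_edges_def using finite_seam_edges finite_grid_edges by auto

lemma top_edges_disjoint_od_lower_edges: "top_edges m \<inter> od_lower_edges m = {}"
  unfolding top_edges_def od_lower_edges_def seam_edges_def grid_edges_def by auto

lemma top_edges_disjoint_grid_edges: "top_edges m \<inter> grid_edges (Suc m) k 0 n = {}"
  unfolding top_edges_def grid_edges_def by auto

lemma od_internal_eq: "m \<ge> 1 \<Longrightarrow> od_internal m = top_edges m \<union> od_lower_edges m"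
  unfolding od_internal_def top_edges_def od_lower_edges_def seam_edges_def grid_edges_def
  by (auto; linarith?)

lemma ev_internal_eq: "ev_internal m = top_edges m \<union> grid_edges (Suc m) m 0 m"
  unfolding ev_internal_def top_edges_def grid_edges_def
  by (auto; linarith?)

lemma od_verts_eq: "od_verts m = {1..m} \<times> {1..m} \<union> od_lower_verts m"
  unfolding od_verts_def od_lower_verts_def by auto

lemma ev_verts_eq: "ev_verts m = {1..m} \<times> {1..m} \<union> ev_lower_verts m"
  unfolding ev_verts_def ev_lower_verts_def by auto

lemma od_cfg_top:
  assumes "m \<ge> 1" "T \<subseteq> top_edges m" "S \<subseteq> od_lower_edges m" "v \<in> {1..m} \<times> {1..m}"
  shows "od_cfg m (T \<union> S) v = ev_cfg m T v"
proof -
  obtain r j where v: "v = (r, j)" "1 \<le> r" "r \<le> m" "1 \<le> j" "j \<le> m"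
    using assms(4) by auto
  have hor: "H r j' \<in> T \<union> S \<longleftrightarrow> H r j' \<in> T" for j'
    using assms(3) v unfolding od_lower_edges_def seam_edges_def grid_edges_def by auto
  have ver: "V r' j \<in> T \<union> S \<longleftrightarrow> V r' j \<in> T" if "r' \<le> Suc m" for r'
    using assms(3) v that unfolding od_lower_edges_def seam_edges_def grid_edges_def by auto
  show ?thesis
    using assms(1) v hor ver[of r] ver[of "Suc r"] unfolding od_hor_def od_ver_def ev_hor_def ev_ver_def by auto
qed

lemma ev_cfg_top:
  assumes "T \<subseteq> top_edges m" "S \<subseteq> grid_edges (Suc m) m 0 m" "v \<in> {1..m} \<times> {1..m}"
  shows "ev_cfg m (T \<union> S) v = ev_cfg m T v"
proof -
  obtain r j where v: "v = (r, j)" "1 \<le> r" "r \<le> m" "1 \<le> j" "j \<le> m"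
    using assms(3) by auto
  have hor: "H r j' \<in> T \<union> S \<longleftrightarrow> H r j' \<in> T" for j'
    using assms(2) v unfolding grid_edges_def by auto
  have ver: "V r' j \<in> T \<union> S \<longleftrightarrow> V r' j \<in> T" if "r' \<le> Suc m" for r'
    using assms(2) v that unfolding grid_edges_def by auto
  show ?thesis
    using v hor ver[of r] ver[of "Suc r"] unfolding ev_hor_def ev_ver_def by auto
qed

lemma Z_HT_odd_eq_sum_top:
  assumes "m \<ge> 1"
  shows "Z_HT_odd a m x y = (\<Sum>T\<in>Pow (top_edges m). top_weight a m x y T * od_lower_pf a m x y T)"
proof -
  have fin: "finite (od_internal m)" "finite (od_verts m)"
    unfolding od_internal_eq[OF assms] od_verts_eq od_lower_verts_def
    by (auto simp: finite_top_edges finite_od_lower_edges)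
  have "Z_HT_odd a m x y = (\<Sum>S\<in>Pow (top_edges m \<union> od_lower_edges m).
      \<Prod>v\<in>{1..m} \<times> {1..m} \<union> od_lower_verts m. ice_weight a (od_par m x y v) (od_cfg m S v))"
    unfolding Z_HT_odd_def pfun_eq_sum_Pow[OF fin] by (simp only: od_internal_eq[OF assms] od_verts_eq)
  also have "\<dots> = (\<Sum>T\<in>Pow (top_edges m). top_weight a m x y T * od_lower_pf a m x y T)"
    unfolding top_weight_def od_lower_pf_def
  proof (rule sum_Pow_prod_split_region)
    fix T S v
    assume "T \<subseteq> top_edges m" "S \<subseteq> od_lower_edges m" "v \<in> {1..m} \<times> {1..m}"
    moreover from this have "od_par m x y v = ev_par m x y v"
      by (auto simp: min_def)
    ultimately show "ice_weight a (od_par m x y v) (od_cfg m (T \<union> S) v) = ice_weight a (ev_par m x y v) (ev_cfg m T v)"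
      using od_cfg_top[OF assms] by simp
  qed (auto simp: finite_top_edges finite_od_lower_edges top_edges_disjoint_od_lower_edges od_lower_verts_def)
  finally show ?thesis .
qed

lemma Z_HT_even_eq_sum_top:
  "Z_HT_even a m x y = (\<Sum>T\<in>Pow (top_edges m). top_weight a m x y T * ev_lower_pf a m x y T)"
proof -
  have fin: "finite (ev_internal m)" "finite (ev_verts m)"
    unfolding ev_internal_eq ev_verts_eq ev_lower_verts_def by (auto simp: finite_top_edges finite_grid_edges)
  have "Z_HT_even a m x y = (\<Sum>S\<in>Pow (top_edges m \<union> grid_edges (Suc m) m 0 m).
      \<Prod>v\<in>{1..m} \<times> {1..m} \<union> ev_lower_verts m. ice_weight a (ev_par m x y v) (ev_cfg m S v))"
    unfolding Z_HT_even_def pfun_eq_sum_Pow[OF fin] by (simp only: ev_internal_eq ev_verts_eq)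
  also have "\<dots> = (\<Sum>T\<in>Pow (top_edges m). top_weight a m x y T * ev_lower_pf a m x y T)"
    unfolding top_weight_def ev_lower_pf_def
  proof (rule sum_Pow_prod_split_region)
    fix T S v
    assume "T \<subseteq> top_edges m" "S \<subseteq> grid_edges (Suc m) m 0 m" "v \<in> {1..m} \<times> {1..m}"
    then show "ice_weight a (ev_par m x y v) (ev_cfg m (T \<union> S) v) = ice_weight a (ev_par m x y v) (ev_cfg m T v)"
      by (simp only: ev_cfg_top)
  qed (auto simp: finite_top_edges finite_grid_edges top_edges_disjoint_grid_edges ev_lower_verts_def)
  finally show ?thesis .
qed

text \<open>In row \<open>m + 1\<close> the right edge of the block continues as the top edge of column \<open>m + 1\<close>.\<close>

definition seam_right :: "nat \<Rightarrow> edge set \<Rightarrow> nat \<Rightarrow> bool" where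
  "seam_right m P r = (if r = Suc m then V (m + 2) (Suc m) \<notin> P else H r (Suc m) \<in> P)"

lemma od_cfg_lower_block:
  assumes m: "m \<ge> 1" and T: "T \<subseteq> top_edges m" and P: "P \<subseteq> seam_edges m"
    and Q1: "Q1 \<subseteq> grid_edges (Suc m) (Suc m) 0 m" and Q2: "Q2 \<subseteq> grid_edges (m + 2) m m 1"
    and r: "Suc m \<le> r" "r \<le> 2 * m + 1" and j: "1 \<le> j" "j \<le> m"
  defines "S \<equiv> T \<union> (P \<union> (Q1 \<union> Q2))" and "tp \<equiv> \<lambda>j. V (Suc m) j \<in> T"
  shows "od_cfg m S (r, j) =
    (grid_hor 0 m (\<lambda>_. True) (seam_right m P) Q1 r j, grid_hor 0 m (\<lambda>_. True) (seam_right m P) Q1 r (Suc j),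
     grid_ver (Suc m) (Suc m) tp (\<lambda>_. False) Q1 r j, grid_ver (Suc m) (Suc m) tp (\<lambda>_. False) Q1 (Suc r) j)"
proof -
  have h1: "H r j' \<in> S \<longleftrightarrow> H r j' \<in> Q1" if "j' \<le> m" for j'
    using T P Q2 r that unfolding S_def top_edges_def seam_edges_def grid_edges_def by auto
  have h2: "H r (Suc m) \<in> S \<longleftrightarrow> H r (Suc m) \<in> P" if "r \<noteq> Suc m"
    using T Q1 Q2 r that unfolding S_def top_edges_def grid_edges_def by auto
  have v1: "V (m + 2) (Suc m) \<in> S \<longleftrightarrow> V (m + 2) (Suc m) \<in> P"
    using T Q1 Q2 unfolding S_def top_edges_def grid_edges_def by auto
  have v2: "V (Suc m) j \<in> S \<longleftrightarrow> V (Suc m) j \<in> T"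
    using P Q1 Q2 j unfolding S_def seam_edges_def grid_edges_def by auto
  have v3: "V r' j \<in> S \<longleftrightarrow> V r' j \<in> Q1" if "Suc m < r'" for r'
    using T P Q2 j that unfolding S_def top_edges_def seam_edges_def grid_edges_def by auto
  have "od_hor m S r (j + 1) = grid_hor 0 m (\<lambda>_. True) (seam_right m P) Q1 r (Suc j)"
  proof (cases "j = m")
    case True
    then show ?thesis
      using m r h2 v1 unfolding od_hor_def od_ver_def grid_hor_def seam_right_def by auto
  next
    case False
    then show ?thesis
      using m r j h1[of "Suc j"] unfolding od_hor_def grid_hor_def by auto
  qed
  moreover have "od_hor m S r j = grid_hor 0 m (\<lambda>_. True) (seam_right m P) Q1 r j"
    using m r j h1 unfolding od_hor_def grid_hor_def by auto
  moreover have "od_ver m S r j = grid_ver (Suc m) (Suc m) tp (\<lambda>_. False) Q1 r j"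
    using m r j v2 v3[of r] unfolding od_ver_def grid_ver_def tp_def by auto
  moreover have "od_ver m S (r + 1) j = grid_ver (Suc m) (Suc m) tp (\<lambda>_. False) Q1 (Suc r) j"
    using m r j v3[of "Suc r"] unfolding od_ver_def grid_ver_def by auto
  ultimately show ?thesis
    by simp
qed

lemma od_cfg_extra_column:
  assumes m: "m \<ge> 1" and T: "T \<subseteq> top_edges m" and P: "P \<subseteq> seam_edges m"
    and Q1: "Q1 \<subseteq> grid_edges (Suc m) (Suc m) 0 m" and Q2: "Q2 \<subseteq> grid_edges (m + 2) m m 1"
    and r: "m + 2 \<le> r" "r \<le> 2 * m + 1"
  defines "S \<equiv> T \<union> (P \<union> (Q1 \<union> Q2))"
    and "lf \<equiv> \<lambda>r. H r (Suc m) \<in> P" and "rt \<equiv> \<lambda>r. H (2 * m + 2 - r) (Suc m) \<notin> T"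
    and "tp \<equiv> \<lambda>_. V (m + 2) (Suc m) \<in> P"
  shows "od_cfg m S (r, Suc m) =
    (grid_hor m 1 lf rt Q2 r (Suc m), grid_hor m 1 lf rt Q2 r (Suc (Suc m)),
     grid_ver (m + 2) m tp (\<lambda>_. False) Q2 r (Suc m), grid_ver (m + 2) m tp (\<lambda>_. False) Q2 (Suc r) (Suc m))"
proof -
  have h2: "H r (Suc m) \<in> S \<longleftrightarrow> H r (Suc m) \<in> P"
    using T Q1 Q2 r unfolding S_def top_edges_def grid_edges_def by auto
  have h3: "H (2 * m + 2 - r) (Suc m) \<in> S \<longleftrightarrow> H (2 * m + 2 - r) (Suc m) \<in> T"
    using P Q1 Q2 r unfolding S_def seam_edges_def grid_edges_def by auto
  have v1: "V (m + 2) (Suc m) \<in> S \<longleftrightarrow> V (m + 2) (Suc m) \<in> P"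
    using T Q1 Q2 unfolding S_def top_edges_def grid_edges_def by auto
  have v3: "V r' (Suc m) \<in> S \<longleftrightarrow> V r' (Suc m) \<in> Q2" if "m + 2 < r'" for r'
    using T P Q1 that unfolding S_def top_edges_def seam_edges_def grid_edges_def by auto
  have "od_hor m S r (Suc m) = grid_hor m 1 lf rt Q2 r (Suc m)"
    using m r h2 unfolding od_hor_def grid_hor_def lf_def by auto
  moreover have "od_hor m S r (Suc m + 1) = grid_hor m 1 lf rt Q2 r (Suc (Suc m))"
    using m r h3 unfolding od_hor_def grid_hor_def rt_def by auto
  moreover have "od_ver m S r (Suc m) = grid_ver (m + 2) m tp (\<lambda>_. False) Q2 r (Suc m)"
    using m r v1 v3[of r] unfolding od_ver_def grid_ver_def tp_def by auto
  moreover have "od_ver m S (r + 1) (Suc m) = grid_ver (m + 2) m tp (\<lambda>_. False) Q2 (Suc r) (Suc m)"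
    using m r v3[of "Suc r"] unfolding od_ver_def grid_ver_def by auto
  ultimately show ?thesis
    by simp
qed

lemma ev_cfg_lower_block:
  assumes m: "m \<ge> 1" and T: "T \<subseteq> top_edges m" and R: "R \<subseteq> grid_edges (Suc m) m 0 m"
    and r: "Suc m \<le> r" "r \<le> 2 * m" and j: "1 \<le> j" "j \<le> m"
  defines "rt \<equiv> \<lambda>r. H (2 * m + 1 - r) (Suc m) \<notin> T" and "tp \<equiv> \<lambda>j. V (Suc m) j \<in> T"
  shows "ev_cfg m (T \<union> R) (r, j) =
    (grid_hor 0 m (\<lambda>_. True) rt R r j, grid_hor 0 m (\<lambda>_. True) rt R r (Suc j),
     grid_ver (Suc m) m tp (\<lambda>_. False) R r j, grid_ver (Suc m) m tp (\<lambda>_. False) R (Suc r) j)"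
proof -
  have h1: "H r j' \<in> T \<union> R \<longleftrightarrow> H r j' \<in> R" if "j' \<le> m" for j'
    using T r that unfolding top_edges_def by auto
  have h3: "H (2 * m + 1 - r) (Suc m) \<in> T \<union> R \<longleftrightarrow> H (2 * m + 1 - r) (Suc m) \<in> T"
    using R r unfolding grid_edges_def by auto
  have v2: "V (Suc m) j \<in> T \<union> R \<longleftrightarrow> V (Suc m) j \<in> T"
    using R unfolding grid_edges_def by auto
  have v3: "V r' j \<in> T \<union> R \<longleftrightarrow> V r' j \<in> R" if "Suc m < r'" for r'
    using T that unfolding top_edges_def by auto
  have "ev_hor m (T \<union> R) r j = grid_hor 0 m (\<lambda>_. True) rt R r j"
    using m r j h1 unfolding ev_hor_def grid_hor_def by auto
  moreover have "ev_hor m (T \<union> R) r (j + 1) = grid_hor 0 m (\<lambda>_. True) rt R r (Suc j)"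
    using m r j h1[of "Suc j"] h3 unfolding ev_hor_def grid_hor_def rt_def by auto
  moreover have "ev_ver m (T \<union> R) r j = grid_ver (Suc m) m tp (\<lambda>_. False) R r j"
    using m r j v2 v3[of r] unfolding ev_ver_def grid_ver_def tp_def by auto
  moreover have "ev_ver m (T \<union> R) (r + 1) j = grid_ver (Suc m) m tp (\<lambda>_. False) R (Suc r) j"
    using m r j v3[of "Suc r"] unfolding ev_ver_def grid_ver_def by auto
  ultimately show ?thesis
    by simp
qed

definition od_block_pf where
  "od_block_pf a m x y T P = grid_pf a (Suc m) (Suc m) 0 m (\<lambda>_. True) (seam_right m P) (\<lambda>j. V (Suc m) j \<in> T) (\<lambda>_. False)
      (\<lambda>r. x (min r (2 * m + 2 - r))) y"

definition od_column_pf where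
  "od_column_pf a m x y T P = grid_pf a (m + 2) m m 1 (\<lambda>r. H r (Suc m) \<in> P) (\<lambda>r. H (2 * m + 2 - r) (Suc m) \<notin> T)
      (\<lambda>_. V (m + 2) (Suc m) \<in> P) (\<lambda>_. False) (\<lambda>r. x (min r (2 * m + 2 - r))) y"

lemma prod_od_lower_verts:
  fixes x y :: "nat \<Rightarrow> complex"
  assumes m: "m \<ge> 1" and T: "T \<subseteq> top_edges m" and P: "P \<subseteq> seam_edges m"
    and Q1: "Q1 \<subseteq> grid_edges (Suc m) (Suc m) 0 m" and Q2: "Q2 \<subseteq> grid_edges (m + 2) m m 1"
  defines "px \<equiv> \<lambda>r. x (min r (2 * m + 2 - r))"
  shows "(\<Prod>v\<in>od_lower_verts m. ice_weight a (od_par m x y v) (od_cfg m (T \<union> (P \<union> (Q1 \<union> Q2))) v)) =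
    (\<Prod>r\<in>{Suc m..<Suc m + Suc m}. \<Prod>j\<in>{0<..m}.
       grid_weight a (Suc m) (Suc m) 0 m (\<lambda>_. True) (seam_right m P) (\<lambda>j. V (Suc m) j \<in> T) (\<lambda>_. False) px y Q1 r j)
    * (\<Prod>r\<in>{m + 2..<m + 2 + m}. \<Prod>j\<in>{m<..m + 1}.
       grid_weight a (m + 2) m m 1 (\<lambda>r. H r (Suc m) \<in> P) (\<lambda>r. H (2 * m + 2 - r) (Suc m) \<notin> T)
         (\<lambda>_. V (m + 2) (Suc m) \<in> P) (\<lambda>_. False) px y Q2 r j)"
proof -
  have split: "finite ({Suc m..<Suc m + Suc m} \<times> {0<..m})" "finite ({m + 2..<m + 2 + m} \<times> {m<..m + 1})"
    "{Suc m..<Suc m + Suc m} \<times> {0<..m} \<inter> {m + 2..<m + 2 + m} \<times> {m<..m + 1} = {}"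
    by auto
  have block: "ice_weight a (od_par m x y (r, j)) (od_cfg m (T \<union> (P \<union> (Q1 \<union> Q2))) (r, j)) =
      grid_weight a (Suc m) (Suc m) 0 m (\<lambda>_. True) (seam_right m P) (\<lambda>j. V (Suc m) j \<in> T) (\<lambda>_. False) px y Q1 r j"
    if "r \<in> {Suc m..<Suc m + Suc m}" "j \<in> {0<..m}" for r j
    using that od_cfg_lower_block[OF m T P Q1 Q2, of r j] by (simp add: grid_weight_def px_def)
  have column: "ice_weight a (od_par m x y (r, j)) (od_cfg m (T \<union> (P \<union> (Q1 \<union> Q2))) (r, j)) =
      grid_weight a (m + 2) m m 1 (\<lambda>r. H r (Suc m) \<in> P) (\<lambda>r. H (2 * m + 2 - r) (Suc m) \<notin> T)
        (\<lambda>_. V (m + 2) (Suc m) \<in> P) (\<lambda>_. False) px y Q2 r j"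
    if "r \<in> {m + 2..<m + 2 + m}" "j \<in> {m<..m + 1}" for r j
  proof -
    have "j = Suc m"
      using that(2) by simp
    then show ?thesis
      using that od_cfg_extra_column[OF m T P Q1 Q2, of r] by (simp add: grid_weight_def px_def)
  qed
  show ?thesis
    unfolding od_lower_verts_def prod.union_disjoint[OF split] prod.cartesian_product'
    by (intro arg_cong2[where f = times] prod.cong refl block column) assumption+
qed

lemma od_lower_pf_eq_sum_seam:
  assumes m: "m \<ge> 1" and T: "T \<subseteq> top_edges m"
  shows "od_lower_pf a m x y T = (\<Sum>P\<in>Pow (seam_edges m). od_block_pf a m x y T P * od_column_pf a m x y T P)"
proof -
  have fin: "finite (seam_edges m)" "finite (grid_edges (Suc m) (Suc m) 0 m \<union> grid_edges (m + 2) m m 1)"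
    "finite (grid_edges (Suc m) (Suc m) 0 m)" "finite (grid_edges (m + 2) m m 1)"
    by (simp_all add: finite_seam_edges finite_grid_edges)
  have disj: "seam_edges m \<inter> (grid_edges (Suc m) (Suc m) 0 m \<union> grid_edges (m + 2) m m 1) = {}"
    "grid_edges (Suc m) (Suc m) 0 m \<inter> grid_edges (m + 2) m m 1 = {}"
    unfolding seam_edges_def grid_edges_def by auto
  show ?thesis
    unfolding od_lower_pf_def od_lower_edges_def sum_Pow_Un[OF fin(1,2) disj(1)] sum_Pow_Un[OF fin(3,4) disj(2)]
      od_block_pf_def od_column_pf_def grid_pf_def add_0 sum_product
    by (intro sum.cong refl prod_od_lower_verts[OF m T]) auto
qed

definition lower_params :: "nat \<Rightarrow> (nat \<Rightarrow> complex) \<Rightarrow> complex list" where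
  "lower_params m x = map (\<lambda>r. x (min r (2 * m + 2 - r))) [m + 2..<m + 2 + m]"

definition uturn_ends :: "nat \<Rightarrow> edge set \<Rightarrow> bool list" where
  "uturn_ends m T = map (\<lambda>r. H (2 * m + 2 - r) (Suc m) \<notin> T) [m + 2..<m + 2 + m]"

lemma length_lower_params [simp]: "length (lower_params m x) = m"
  by (simp add: lower_params_def del: upt_Suc)

lemma upt_lower_rows: "[m + 2..<m + 2 + m] = map Suc [Suc m..<Suc m + m]"
  by (simp add: map_Suc_upt)

lemma lower_params_eq: "lower_params m x = map (\<lambda>r. x (min r (2 * m + 1 - r))) [Suc m..<Suc m + m]"
  unfolding lower_params_def upt_lower_rows by (auto simp: min_def)

lemma uturn_ends_eq: "uturn_ends m T = map (\<lambda>r. H (2 * m + 1 - r) (Suc m) \<notin> T) [Suc m..<Suc m + m]"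
  unfolding uturn_ends_def upt_lower_rows by auto

lemma ev_lower_pf_eq_block_pf:
  assumes m: "m \<ge> 1" and T: "T \<subseteq> top_edges m"
  shows "ev_lower_pf a m x y T =
    block_pf a (lower_params m x) (map y [1..<Suc m]) (replicate m True)
      (map (\<lambda>j. V (Suc m) j \<in> T) [1..<Suc m]) (replicate m False) (uturn_ends m T)"
proof -
  have "ev_lower_pf a m x y T = grid_pf a (Suc m) m 0 m (\<lambda>_. True) (\<lambda>r. H (2 * m + 1 - r) (Suc m) \<notin> T)
      (\<lambda>j. V (Suc m) j \<in> T) (\<lambda>_. False) (\<lambda>r. x (min r (2 * m + 1 - r))) y"
    unfolding ev_lower_pf_def grid_pf_def ev_lower_verts_def prod.cartesian_product' add_0
    using ev_cfg_lower_block[OF m T] by (intro sum.cong prod.cong refl) (auto simp: grid_weight_def)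
  then show ?thesis
    unfolding grid_pf_eq_block_pf[OF m m] lower_params_eq uturn_ends_eq
    by (simp add: map_replicate_const del: upt_Suc)
qed

definition seam_edge :: "nat \<Rightarrow> nat \<Rightarrow> edge" where
  "seam_edge m i = (if i = 0 then V (m + 2) (Suc m) else H (Suc m + i) (Suc m))"

lemma seam_edges_eq_image: "seam_edges m = seam_edge m ` {..<Suc m}"
proof
  show "seam_edges m \<subseteq> seam_edge m ` {..<Suc m}"
  proof
    fix z
    assume "z \<in> seam_edges m"
    then consider "z = V (m + 2) (Suc m)" | r where "z = H r (Suc m)" "m + 2 \<le> r" "r \<le> 2 * m + 1"
      unfolding seam_edges_def by auto
    then show "z \<in> seam_edge m ` {..<Suc m}"
    proof cases
      case 1
      then show ?thesis
        unfolding seam_edge_def by (auto intro: image_eqI[where x = 0])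
    next
      case 2
      then show ?thesis
        unfolding seam_edge_def by (auto intro!: image_eqI[where x = "r - Suc m"])
    qed
  qed
qed (auto simp: seam_edges_def seam_edge_def)

lemma inj_on_seam_edge: "inj_on (seam_edge m) {..<Suc m}"
  unfolding inj_on_def seam_edge_def by auto

lemma V_mem_seam_edge_image: "V (m + 2) (Suc m) \<in> seam_edge m ` {i. i < Suc m \<and> (b # hs) ! i} \<longleftrightarrow> b"
  unfolding seam_edge_def by (auto simp: image_iff)

lemma H_mem_seam_edge_image:
  assumes "i < m"
  shows "H (m + 2 + i) (Suc m) \<in> seam_edge m ` {i. i < Suc m \<and> (b # hs) ! i} \<longleftrightarrow> hs ! i"
proof -
  have "H (m + 2 + i) (Suc m) = seam_edge m j \<longleftrightarrow> j = Suc i" for j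
    unfolding seam_edge_def by auto
  then show ?thesis
    using assms by (auto simp: image_iff)
qed

lemma od_block_pf_seam_edge_image:
  assumes m: "m \<ge> 1" and hs: "length hs = m"
  shows "od_block_pf a m x y T (seam_edge m ` {i. i < Suc m \<and> (b # hs) ! i}) =
    block_pf a (x (Suc m) # lower_params m x) (map y [1..<Suc m]) (True # replicate m True)
      (map (\<lambda>j. V (Suc m) j \<in> T) [1..<Suc m]) (replicate m False) ((\<not> b) # hs)"
proof -
  let ?P = "seam_edge m ` {i. i < Suc m \<and> (b # hs) ! i}"
  have rows: "[Suc m..<Suc m + Suc m] = Suc m # [m + 2..<m + 2 + m]"
    by (simp add: upt_conv_Cons)
  have "map (seam_right m ?P) [m + 2..<m + 2 + m] = hs"
    using hs H_mem_seam_edge_image[of _ m b hs] by (intro nth_equalityI) (simp_all add: seam_right_def del: upt_Suc)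
  moreover have "seam_right m ?P (Suc m) = (\<not> b)"
    unfolding seam_right_def using V_mem_seam_edge_image[of m b hs] by simp
  ultimately have right: "map (seam_right m ?P) [Suc m..<Suc m + Suc m] = (\<not> b) # hs"
    unfolding rows by simp
  have params: "map (\<lambda>r. x (min r (2 * m + 2 - r))) [Suc m..<Suc m + Suc m] = x (Suc m) # lower_params m x"
    unfolding rows lower_params_def by simp
  have "1 \<le> Suc m"
    by simp
  show ?thesis
    unfolding od_block_pf_def grid_pf_eq_block_pf[OF \<open>1 \<le> Suc m\<close> m] right params
    by (simp add: map_replicate_const del: upt_Suc)
qed

lemma od_column_pf_seam_edge_image:
  assumes m: "m \<ge> 1" and hs: "length hs = m"
  shows "od_column_pf a m x y T (seam_edge m ` {i. i < Suc m \<and> (b # hs) ! i}) =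
    column_pf a (y (Suc m)) (lower_params m x) b hs (uturn_ends m T) False"
proof -
  have "map (\<lambda>r. H r (Suc m) \<in> seam_edge m ` {i. i < Suc m \<and> (b # hs) ! i}) [m + 2..<m + 2 + m] = hs"
    using hs H_mem_seam_edge_image[of _ m b hs] by (intro nth_equalityI) (simp_all del: upt_Suc)
  then show ?thesis
    unfolding od_column_pf_def grid_pf_eq_block_pf[OF m order_refl] V_mem_seam_edge_image
    by (simp add: map_replicate_const lower_params_def uturn_ends_def block_pf_single_column[symmetric])
qed

lemma sum_seam_eq_sum_blists:
  assumes m: "m \<ge> 1"
  shows "(\<Sum>P\<in>Pow (seam_edges m). od_block_pf a m x y T P * od_column_pf a m x y T P) =
    (\<Sum>hs\<in>blists m. \<Sum>g\<in>UNIV.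
       block_pf a (x (Suc m) # lower_params m x) (map y [1..<Suc m]) (True # replicate m True)
         (map (\<lambda>j. V (Suc m) j \<in> T) [1..<Suc m]) (replicate m False) (g # hs)
       * column_pf a (y (Suc m)) (lower_params m x) (\<not> g) hs (uturn_ends m T) False)"
  (is "(\<Sum>P\<in>_. ?G P) = (\<Sum>hs\<in>_. \<Sum>g\<in>_. ?F g hs)")
proof -
  have seam: "?G (seam_edge m ` {i. i < Suc m \<and> (b # hs) ! i}) = ?F g hs" if "hs \<in> blists m" "g = (\<not> b)" for b g hs
    using that by (simp only: od_block_pf_seam_edge_image[OF m] od_column_pf_seam_edge_image[OF m] mem_Collect_eq not_not)
  have "(\<Sum>P\<in>Pow (seam_edges m). ?G P) = (\<Sum>s\<in>blists (Suc m). ?G (seam_edge m ` {i. i < Suc m \<and> s ! i}))"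
    unfolding seam_edges_eq_image by (rule sum_Pow_image_eq_sum_blists[OF inj_on_seam_edge])
  also have "\<dots> = (\<Sum>hs\<in>blists m. ?F False hs) + (\<Sum>hs\<in>blists m. ?F True hs)"
    unfolding sum_blists_Suc by (intro arg_cong2[where f = plus] sum.cong refl seam) simp_all
  also have "\<dots> = (\<Sum>hs\<in>blists m. \<Sum>g\<in>UNIV. ?F g hs)"
    by (simp add: sum_UNIV_bool sum.distrib add.commute)
  finally show ?thesis .
qed

lemma prod_list_lower_params: "(\<Prod>p\<leftarrow>lower_params m x. f p) = (\<Prod>i\<in>{1..m}. f (x i))"
proof -
  have "(\<Prod>p\<leftarrow>lower_params m x. f p) = (\<Prod>r\<leftarrow>[m + 2..<m + 2 + m]. f (x (min r (2 * m + 2 - r))))"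
    unfolding lower_params_def by (simp add: comp_def)
  also have "\<dots> = (\<Prod>r\<in>{m + 2..<m + 2 + m}. f (x (min r (2 * m + 2 - r))))"
    by (simp only: prod.distinct_set_conv_list[OF distinct_upt, symmetric] set_upt)
  also have "\<dots> = (\<Prod>i\<in>{1..m}. f (x i))"
    by (rule prod.reindex_bij_witness[of _ "\<lambda>i. 2 * m + 2 - i" "\<lambda>r. 2 * m + 2 - r"]) (auto simp: min_def)
  finally show ?thesis .
qed

lemma prod_list_map_upt: "(\<Prod>q\<leftarrow>map y [1..<Suc m]. f q) = (\<Prod>i\<in>{1..m}. f (y i))"
  unfolding map_map prod.distinct_set_conv_list[OF distinct_upt, symmetric] set_upt
  by (simp add: comp_def atLeastLessThanSuc_atLeastAtMost)

lemma od_lower_pf_eq_ev_lower_pf: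
  assumes m: "m \<ge> 1" and T: "T \<subseteq> top_edges m" and a: "a \<noteq> 0"
    and nz: "\<forall>i\<in>{1..m + 1}. x i \<noteq> 0 \<and> y i \<noteq> 0" and y: "y (m + 1) = a * x (m + 1)"
  shows "od_lower_pf a m x y T =
    (\<Prod>i=1..m. sigma (a * inverse (x i) * y (m + 1)) * sigma (a * inverse (x (m + 1)) * y i)) * ev_lower_pf a m x y T"
proof -
  have X: "x (Suc m) \<noteq> 0"
    using nz by auto
  have "min r (2 * m + 2 - r) \<in> {1..m + 1}" if "r \<in> {m + 2..<m + 2 + m}" for r
    using that by auto
  then have ps: "\<forall>p\<in>set (lower_params m x). p \<noteq> 0"
    using nz unfolding lower_params_def by fastforce
  have ys: "\<forall>q\<in>set (map y [1..<Suc m]). q \<noteq> 0"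
    using nz by auto
  have "od_lower_pf a m x y T =
    (\<Prod>p\<leftarrow>lower_params m x. sigma (a * inverse (p * inverse (a * x (Suc m)))))
    * (\<Prod>q\<leftarrow>map y [1..<Suc m]. sigma (a * inverse (x (Suc m) * inverse q)))
    * block_pf a (lower_params m x) (map y [1..<Suc m]) (replicate m True)
        (map (\<lambda>j. V (Suc m) j \<in> T) [1..<Suc m]) (replicate m False) (uturn_ends m T)"
    using hook_pf_reduction[OF a X ps ys, of "map (\<lambda>j. V (Suc m) j \<in> T) [1..<Suc m]" "uturn_ends m T"] y
    by (simp add: od_lower_pf_eq_sum_seam[OF m T] sum_seam_eq_sum_blists[OF m] del: upt_Suc)
  also have "\<dots> = (\<Prod>i=1..m. sigma (a * inverse (x i) * y (m + 1)) * sigma (a * inverse (x (m + 1)) * y i))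
      * ev_lower_pf a m x y T"
    unfolding ev_lower_pf_eq_block_pf[OF m T] prod_list_lower_params prod_list_map_upt prod.distrib y
    by (simp add: inverse_mult_distrib mult.assoc)
  finally show ?thesis .
qed

theorem lemma18:
  fixes a :: complex and m :: nat and x y :: "nat \<Rightarrow> complex"
  assumes "m \<ge> 1" and "a \<noteq> 0"
    and "\<forall>i\<in>{1..m+1}. x i \<noteq> 0 \<and> y i \<noteq> 0"
    and "y (m+1) = a * x (m+1)"
  shows "Z_HT_odd a m x y =
    (\<Prod>i=1..m. sigma (a * inverse (x i) * y (m+1)) * sigma (a * inverse (x (m+1)) * y i))
      * Z_HT_even a m x y"
  using od_lower_pf_eq_ev_lower_pf[OF assms(1) _ assms(2-4)]
  by (simp add: Z_HT_odd_eq_sum_top[OF assms(1)] Z_HT_even_eq_sum_top sum_distrib_left mult.left_commute)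

end
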